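(* Let $\sigma$ be a gradual semantics satisfying Stability, let $\mathcal{Q}=\langle\mathcal{A},\mathcal{R}^-,\mathcal{R}^+,\tau\rangle$ be a QBAF and $\alpha\in\mathcal{A}$. (1) If $\sigma(\alpha)>\tau(\alpha)$, then there exists $r\in\mathcal{R}$ with $\phi^\alpha_\sigma(r)>0$. (2) If $\sigma(\alpha)<\tau(\alpha)$, then there exists $r\in\mathcal{R}$ with $\phi^\alpha_\sigma(r)<0$.
   Context: A QBAF is a quadruple $\mathcal{Q}=\langle\mathcal{A},\mathcal{R}^-,\mathcal{R}^+,\tau\rangle$ with $\mathcal{A}$ a finite set of arguments, $\mathcal{R}^-,\mathcal{R}^+\subseteq\mathcal{A}\times\mathcal{A}$ disjoint attack and support relations, and $\tau:\mathcal{A}\to[0,1]$ base scores; $\mathcal{R}=\mathcal{R}^-\cup\mathcal{R}^+$. A gradual semantics $\sigma$ assigns to each QBAF a strength $\sigma(\alpha)\in[0,1]$ to every argument; it is assumed well-defined on every QBAF considered. For $\mathcal{S}\subseteq\mathcal{R}$, $\sigma_{\mathcal{S}}(\alpha)$ denotes the strength of $\alpha$ in $\langle\mathcal{A},\mathcal{R}^-\cap\mathcal{S},\mathcal{R}^+\cap\mathcal{S},\tau\rangle$. The RAE from $r\in\mathcal{R}$ to $\alpha$ under $\sigma$ is $$\phi^\alpha_\sigma(r)=\sum_{\mathcal{S}\subseteq\mathcal{R}\setminus\{r\}}\frac{(|\mathcal{R}|-|\mathcal{S}|-1)!\,|\mathcal{S}|!}{|\mathcal{R}|!}\big[\sigma_{\mathcal{S}\cup\{r\}}(\alpha)-\sigma_{\mathcal{S}}(\alpha)\big].$$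 $\sigma$ satisfies Stability if in every QBAF, every argument with no incoming edges has strength equal to its base score. *)

theory Defs
  imports Main "HOL-Library.FuncSet" Complex_Main
begin

type_synonym 'a qbaf = "'a set \<times> ('a \<times> 'a) set \<times> ('a \<times> 'a) set \<times> ('a \<Rightarrow> real)"

definition args :: "'a qbaf \<Rightarrow> 'a set" where "args Q = fst Q"
definition att :: "'a qbaf \<Rightarrow> ('a \<times> 'a) set" where "att Q = fst (snd Q)"
definition supp :: "'a qbaf \<Rightarrow> ('a \<times> 'a) set" where "supp Q = fst (snd (snd Q))"
definition base :: "'a qbaf \<Rightarrow> 'a \<Rightarrow> real" where "base Q = snd (snd (snd Q))"
definition rels :: "'a qbaf \<Rightarrow> ('a \<times> 'a) set" where "rels Q = att Q \<union> supp Q"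

definition is_qbaf :: "'a qbaf \<Rightarrow> bool" where
  "is_qbaf Q \<longleftrightarrow> finite (args Q) \<and> att Q \<subseteq> args Q \<times> args Q \<and> supp Q \<subseteq> args Q \<times> args Q
     \<and> att Q \<inter> supp Q = {} \<and> (\<forall>a\<in>args Q. 0 \<le> base Q a \<and> base Q a \<le> 1)"

type_synonym 'a semantics = "'a qbaf \<Rightarrow> 'a \<Rightarrow> real"

definition gradual_semantics :: "'a semantics \<Rightarrow> bool" where
  "gradual_semantics \<sigma> \<longleftrightarrow> (\<forall>Q. is_qbaf Q \<longrightarrow> (\<forall>a\<in>args Q. 0 \<le> \<sigma> Q a \<and> \<sigma> Q a \<le> 1))"

definition stability :: "'a semantics \<Rightarrow> bool" where
  "stability \<sigma> \<longleftrightarrow> (\<forall>Q. is_qbaf Q \<longrightarrow>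
     (\<forall>a\<in>args Q. (\<forall>b. (b, a) \<notin> rels Q) \<longrightarrow> \<sigma> Q a = base Q a))"

definition restrict_rels :: "'a qbaf \<Rightarrow> ('a \<times> 'a) set \<Rightarrow> 'a qbaf" where
  "restrict_rels Q S = (args Q, att Q \<inter> S, supp Q \<inter> S, base Q)"

text \<open>Relation attribution explanation (Shapley value of edge r towards argument a).\<close>
definition RAE :: "'a semantics \<Rightarrow> 'a qbaf \<Rightarrow> 'a \<Rightarrow> ('a \<times> 'a) \<Rightarrow> real" where
  "RAE \<sigma> Q a r = (\<Sum>S \<in> Pow (rels Q - {r}).
     (fact (card (rels Q) - card S - 1) * fact (card S) / fact (card (rels Q)))
     * (\<sigma> (restrict_rels Q (S \<union> {r})) a - \<sigma> (restrict_rels Q S) a))"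

end

theory Submission
  imports Defs
begin

text \<open>The RAEs of \<open>\<alpha>\<close> are the Shapley values of the cooperative game
  \<open>S \<mapsto> \<sigma>\<^sub>S(\<alpha>)\<close> on the edge set, so by efficiency of the Shapley value they sum to
  \<open>\<sigma>\<^sub>\<R>(\<alpha>) - \<sigma>\<^sub>{}(\<alpha>)\<close>. Without edges no argument is attacked or supported, hence
  Stability gives \<open>\<sigma>\<^sub>{}(\<alpha>) = \<tau>(\<alpha>)\<close>, and the sum of the RAEs is \<open>\<sigma>(\<alpha>) - \<tau>(\<alpha>)\<close>,
  which forces a summand of the same sign.
  Efficiency itself follows by regrouping the double sum over pairs \<open>(r, S)\<close> by
  \<open>T = S \<union> {r}\<close>: the coefficient of \<open>v T\<close> telescopes to \<open>[T = R] - [T = {}]\<close>.\<close>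

definition shapley_weight :: "nat \<Rightarrow> nat \<Rightarrow> real" where
  "shapley_weight n s = fact (n - s - 1) * fact s / fact n"

definition shapley :: "'p set \<Rightarrow> ('p set \<Rightarrow> real) \<Rightarrow> 'p \<Rightarrow> real" where
  "shapley R v r =
     (\<Sum>S\<in>Pow (R - {r}). shapley_weight (card R) (card S) * (v (insert r S) - v S))"

lemma sum_Pow_remove_insert:
  assumes "finite R"
  shows "(\<Sum>r\<in>R. \<Sum>S\<in>Pow (R - {r}). g (insert r S)) = (\<Sum>T\<in>Pow R. real (card T) * g T)"
proof -
  have inner: "(\<Sum>S\<in>Pow (R - {r}). g (insert r S)) = (\<Sum>T\<in>Pow R. if r \<in> T then g T else 0)"
    if "r \<in> R" for r
  proof -
    have inj: "inj_on (insert r) (Pow (R - {r}))"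
      unfolding inj_on_def by (metis Diff_insert_absorb PowD subset_Diff_insert)
    have img: "insert r ` Pow (R - {r}) = {T \<in> Pow R. r \<in> T}"
    proof (rule set_eqI, rule iffI)
      fix T assume "T \<in> {T \<in> Pow R. r \<in> T}"
      then have "T = insert r (T - {r})" "T - {r} \<in> Pow (R - {r})" by auto
      then show "T \<in> insert r ` Pow (R - {r})" by blast
    qed (use that in auto)
    have "(\<Sum>S\<in>Pow (R - {r}). g (insert r S)) = (\<Sum>T\<in>{T \<in> Pow R. r \<in> T}. g T)"
      unfolding img[symmetric] by (simp add: sum.reindex[OF inj])
    also have "\<dots> = (\<Sum>T\<in>Pow R. if r \<in> T then g T else 0)"
      using assms by (intro sum.inter_filter) simp
    finally show ?thesis .
  qed
  have "(\<Sum>r\<in>R. \<Sum>S\<in>Pow (R - {r}). g (insert r S))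
      = (\<Sum>T\<in>Pow R. \<Sum>r\<in>R. if r \<in> T then g T else 0)"
    by (simp add: inner sum.swap[of _ _ "Pow R"])
  also have "\<dots> = (\<Sum>T\<in>Pow R. real (card T) * g T)"
  proof (rule sum.cong[OF refl])
    fix T assume "T \<in> Pow R"
    then have "R \<inter> T = T" by auto
    then show "(\<Sum>r\<in>R. if r \<in> T then g T else 0) = real (card T) * g T"
      using assms by (simp add: sum.If_cases)
  qed
  finally show ?thesis .
qed

lemma sum_Pow_remove:
  assumes "finite R"
  shows "(\<Sum>r\<in>R. \<Sum>S\<in>Pow (R - {r}). h S) = (\<Sum>T\<in>Pow R. real (card R - card T) * h T)"
proof -
  have inner: "(\<Sum>S\<in>Pow (R - {r}). h S) = (\<Sum>T\<in>Pow R. if r \<notin> T then h T else 0)" for r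
  proof -
    have "Pow (R - {r}) = {T \<in> Pow R. r \<notin> T}" by auto
    then show ?thesis
      using assms sum.inter_filter[of "Pow R" h "\<lambda>T. r \<notin> T"] by simp
  qed
  have "(\<Sum>r\<in>R. \<Sum>S\<in>Pow (R - {r}). h S) = (\<Sum>T\<in>Pow R. \<Sum>r\<in>R. if r \<notin> T then h T else 0)"
    by (simp add: inner sum.swap[of _ _ "Pow R"])
  also have "\<dots> = (\<Sum>T\<in>Pow R. real (card R - card T) * h T)"
  proof (rule sum.cong[OF refl])
    fix T assume T: "T \<in> Pow R"
    have "R \<inter> {r. r \<notin> T} = R - T" by auto
    moreover have "card (R - T) = card R - card T"
      using T assms by (simp add: card_Diff_subset finite_subset)
    ultimately show "(\<Sum>r\<in>R. if r \<notin> T then h T else 0) = real (card R - card T) * h T"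
      using assms by (simp add: sum.If_cases)
  qed
  finally show ?thesis .
qed

lemma card_times_shapley_weight_pred:
  assumes "0 < t"
  shows "real t * shapley_weight n (t - 1) = fact (n - t) * fact t / fact n"
proof -
  obtain k where "t = Suc k" using assms gr0_implies_Suc by blast
  then show ?thesis unfolding shapley_weight_def by (simp add: fact_Suc)
qed

lemma card_diff_times_shapley_weight:
  assumes "t < n"
  shows "real (n - t) * shapley_weight n t = fact (n - t) * fact t / fact n"
proof -
  obtain m where m: "n - t = Suc m" using assms by (metis Suc_diff_Suc)
  then have "n - t - 1 = m" by simp
  then show ?thesis unfolding shapley_weight_def m by (simp add: fact_Suc)
qed

lemma shapley_weight_telescope:
  assumes "t \<le> n" "0 < n"
  shows "real t * shapley_weight n (t - 1) - real (n - t) * shapley_weight n t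
       = (if t = n then 1 else 0) - (if t = 0 then 1 else 0)"
proof (cases "t = 0 \<or> t = n")
  case True
  then show ?thesis
    using assms card_times_shapley_weight_pred[of t n] card_diff_times_shapley_weight[of t n]
    by auto
next
  case False
  then show ?thesis
    using assms card_times_shapley_weight_pred[of t n] card_diff_times_shapley_weight[of t n]
    by simp
qed

lemma shapley_efficiency:
  assumes "finite R"
  shows "(\<Sum>r\<in>R. shapley R v r) = v R - v {}"
proof (cases "R = {}")
  case True
  then show ?thesis by simp
next
  case False
  let ?w = "shapley_weight (card R)"
  have card_insert: "card (insert r S) = Suc (card S)" if "r \<in> R" "S \<in> Pow (R - {r})" for r S
  proof -
    have "finite S" "r \<notin> S" using that assms finite_subset[of S R] by auto
    then show ?thesis by simp
  qed
  have coeff: "real (card T) * ?w (card T - 1) - real (card R - card T) * ?w (card T)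
      = (if T = R then 1 else 0) - (if T = {} then 1 else 0)" if "T \<subseteq> R" for T
  proof -
    have "T = R \<longleftrightarrow> card T = card R" "T = {} \<longleftrightarrow> card T = 0"
      using card_subset_eq[OF assms that] finite_subset[OF that assms] by auto
    moreover have "card T \<le> card R" "0 < card R"
      using card_mono[OF assms that] assms False by (auto simp: card_gt_0_iff)
    ultimately show ?thesis using shapley_weight_telescope by presburger
  qed
  have "(\<Sum>r\<in>R. shapley R v r)
      = (\<Sum>r\<in>R. \<Sum>S\<in>Pow (R - {r}). (\<lambda>T. ?w (card T - 1) * v T) (insert r S))
      - (\<Sum>r\<in>R. \<Sum>S\<in>Pow (R - {r}). ?w (card S) * v S)"
    unfolding shapley_def sum_subtractf[symmetric]
    by (intro sum.cong refl) (simp add: card_insert algebra_simps)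
  also have "\<dots> = (\<Sum>T\<in>Pow R. real (card T) * (?w (card T - 1) * v T))
      - (\<Sum>T\<in>Pow R. real (card R - card T) * (?w (card T) * v T))"
    using sum_Pow_remove_insert[OF assms] sum_Pow_remove[OF assms] by simp
  also have "\<dots> = (\<Sum>T\<in>Pow R. ((if T = R then 1 else 0) - (if T = {} then 1 else 0)) * v T)"
    unfolding sum_subtractf[symmetric]
    by (intro sum.cong refl) (simp add: coeff[symmetric] algebra_simps)
  also have "\<dots> = (\<Sum>T\<in>Pow R. (if T = R then v T else 0) - (if T = {} then v T else 0))"
    by (intro sum.cong refl) auto
  also have "\<dots> = v R - v {}"
    using assms by (simp add: sum_subtractf sum.delta')
  finally show ?thesis .
qed

lemma RAE_eq_shapley:
  "RAE \<sigma> Q a r = shapley (rels Q) (\<lambda>S. \<sigma> (restrict_rels Q S) a) r"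
  unfolding RAE_def shapley_def shapley_weight_def by simp

lemma finite_rels: "is_qbaf Q \<Longrightarrow> finite (rels Q)"
  unfolding is_qbaf_def rels_def by (meson finite_SigmaI finite_UnI finite_subset)

lemma restrict_rels_rels: "restrict_rels Q (rels Q) = Q"
  unfolding restrict_rels_def rels_def args_def att_def supp_def base_def by (cases Q) auto

lemma stability_restrict_rels_empty:
  assumes "stability \<sigma>" "is_qbaf Q" "a \<in> args Q"
  shows "\<sigma> (restrict_rels Q {}) a = base Q a"
proof -
  have "is_qbaf (restrict_rels Q {})"
    using assms(2) unfolding is_qbaf_def restrict_rels_def args_def att_def supp_def base_def
    by auto
  then show ?thesis
    using assms unfolding stability_def
    by (auto simp: restrict_rels_def args_def rels_def att_def supp_def base_def)
qed

lemma sum_RAE: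
  assumes "stability \<sigma>" "is_qbaf Q" "a \<in> args Q"
  shows "(\<Sum>r\<in>rels Q. RAE \<sigma> Q a r) = \<sigma> Q a - base Q a"
  using shapley_efficiency[OF finite_rels[OF assms(2)], of "\<lambda>S. \<sigma> (restrict_rels Q S) a"]
  by (simp add: RAE_eq_shapley restrict_rels_rels stability_restrict_rels_empty[OF assms])

theorem corollary1:
  fixes \<sigma> :: "'a semantics" and Q :: "'a qbaf" and \<alpha> :: 'a
  assumes "gradual_semantics \<sigma>" and "stability \<sigma>"
    and "is_qbaf Q" and "\<alpha> \<in> args Q"
  shows "(\<sigma> Q \<alpha> > base Q \<alpha> \<longrightarrow> (\<exists>r \<in> rels Q. RAE \<sigma> Q \<alpha> r > 0))
       \<and> (\<sigma> Q \<alpha> < base Q \<alpha> \<longrightarrow> (\<exists>r \<in> rels Q. RAE \<sigma> Q \<alpha> r < 0))"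
proof -
  have sum: "(\<Sum>r\<in>rels Q. RAE \<sigma> Q \<alpha> r) = \<sigma> Q \<alpha> - base Q \<alpha>"
    using sum_RAE assms(2-4) .
  show ?thesis
  proof (intro conjI impI)
    assume "\<sigma> Q \<alpha> > base Q \<alpha>"
    with sum show "\<exists>r \<in> rels Q. RAE \<sigma> Q \<alpha> r > 0"
      by (metis diff_gt_0_iff_gt not_le sum_nonpos)
  next
    assume "\<sigma> Q \<alpha> < base Q \<alpha>"
    with sum show "\<exists>r \<in> rels Q. RAE \<sigma> Q \<alpha> r < 0"
      by (metis diff_less_0_iff_less not_le sum_nonneg)
  qed
qed

end
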